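(* Let $(X,f)$ be a dynamical system and let $x$ be a minimal point. Then for every $y$ with $(x,y)\in\mathrm{SProx}(f)$, the orbit closure $\overline{\{f^n(x):n\ge0\}}$ is the unique minimal set contained in $\overline{\{f^n(y):n\ge0\}}$. In particular, if $f(x)=x$, then (i) $x$ is the only minimal point in $\overline{\{f^n(y):n\ge0\}}$ for every $y\in\mathrm{SProx}(f)(x)$, and (ii) $\mathrm{SProx}(f)(x)=\bigcup_{y\in\mathrm{SProx}(f)(x)}\overline{\{f^n(y):n\ge0\}}$.
   Context: Dynamical system: compact metric space $X$ with metric $d$ and continuous $f$. A minimal set is a nonempty closed $f$-invariant set with no proper nonempty closed invariant subset; a minimal point is a point of some minimal set. $\mathrm{SProx}(f)=\{(x,y):\{n\in\mathbb N:d(f^nx,f^ny)<\varepsilon\}$ syndetic for every $\varepsilon>0\}$, where syndetic means meeting every subset of $\mathbb N$ with arbitrarily long runs of consecutive integers; $\mathrm{SProx}(f)(x)=\{y:(x,y)\in\mathrm{SProx}(f)\}$. *)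

theory Defs
  imports "HOL-Analysis.Analysis"
begin

definition dyn_system :: "'a::metric_space set \<Rightarrow> ('a \<Rightarrow> 'a) \<Rightarrow> bool" where
  "dyn_system X f \<longleftrightarrow> compact X \<and> continuous_on X f \<and> f ` X \<subseteq> X"

definition orbit_closure :: "('a::topological_space \<Rightarrow> 'a) \<Rightarrow> 'a \<Rightarrow> 'a set" where
  "orbit_closure f x = closure {(f ^^ n) x | n. True}"

definition minimal_set :: "'a::topological_space set \<Rightarrow> ('a \<Rightarrow> 'a) \<Rightarrow> 'a set \<Rightarrow> bool" where
  "minimal_set X f M \<longleftrightarrow> M \<noteq> {} \<and> M \<subseteq> X \<and> closed M \<and> f ` M \<subseteq> M \<and>
     (\<forall>N. N \<noteq> {} \<and> N \<subseteq> M \<and> closed N \<and> f ` N \<subseteq> N \<longrightarrow> N = M)"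

definition minimal_point :: "'a::topological_space set \<Rightarrow> ('a \<Rightarrow> 'a) \<Rightarrow> 'a \<Rightarrow> bool" where
  "minimal_point X f x \<longleftrightarrow> (\<exists>M. minimal_set X f M \<and> x \<in> M)"

definition thick :: "nat set \<Rightarrow> bool" where
  "thick T \<longleftrightarrow> (\<forall>L. \<exists>n. {n..<n+L} \<subseteq> T)"

definition syndetic :: "nat set \<Rightarrow> bool" where
  "syndetic S \<longleftrightarrow> (\<forall>T. thick T \<longrightarrow> S \<inter> T \<noteq> {})"

definition SProx :: "'a::metric_space set \<Rightarrow> ('a \<Rightarrow> 'a) \<Rightarrow> ('a \<times> 'a) set" where
  "SProx X f = {(x, y). x \<in> X \<and> y \<in> X \<and>
     (\<forall>e>0. syndetic {n. dist ((f ^^ n) x) ((f ^^ n) y) < e})}"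

definition SProx_at :: "'a::metric_space set \<Rightarrow> ('a \<Rightarrow> 'a) \<Rightarrow> 'a \<Rightarrow> 'a set" where
  "SProx_at X f x = {y. (x, y) \<in> SProx X f}"

end

theory Submission
  imports Defs
begin

(* Let x lie in the minimal set M_x and let (x,y) be strongly proximal: for every
   e > 0 the times n with dist (f^n x) (f^n y) < e form a syndetic set.
   (1) Mere proximality already forces M_x into the orbit closure of y: otherwise
       the compact sets M_x and orbit_closure f y have positive distance, which
       bounds dist (f^n x) (f^n y) from below.
   (2) A minimal set M in orbit_closure f y disjoint from M_x is impossible: the
       orbit of y comes close to M along a thick set of times (it shadows a point
       of M by continuity of f, ..., f^L), this thick set meets the syndetic set of
       times at which x and y are close, so f^n x gets close to M -- contradicting
       the positive distance between M and M_x.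
   (3) For a fixed point x, its minimal set is {x}, so (1) and (2) make x the only
       minimal point of orbit_closure f y; and strong proximality to x means that
       the orbit visits balls around x with bounded gaps, a property that passes
       from the orbit of y to every point of its closure. *)

lemma syndetic_iff_bounded_gaps:
  "syndetic S \<longleftrightarrow> (\<exists>L. \<forall>n. \<exists>j\<in>{n..<n+L}. j \<in> S)"
proof
  assume syn: "syndetic S"
  show "\<exists>L. \<forall>n. \<exists>j\<in>{n..<n+L}. j \<in> S"
  proof (rule ccontr)
    assume "\<nexists>L. \<forall>n. \<exists>j\<in>{n..<n+L}. j \<in> S"
    then have "thick (- S)" unfolding thick_def by blast
    then show False using syn unfolding syndetic_def by blast
  qed
next
  assume "\<exists>L. \<forall>n. \<exists>j\<in>{n..<n+L}. j \<in> S"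
  then obtain L where L: "\<And>n. \<exists>j\<in>{n..<n+L}. j \<in> S" by blast
  show "syndetic S" unfolding syndetic_def
  proof (intro allI impI)
    fix T assume "thick T"
    then obtain n where "{n..<n+L} \<subseteq> T" unfolding thick_def by blast
    then show "S \<inter> T \<noteq> {}" using L[of n] by blast
  qed
qed

lemma syndetic_nonempty: "syndetic S \<Longrightarrow> \<exists>n. n \<in> S"
  unfolding syndetic_def thick_def by blast

lemma compact_disjoint_separated:
  fixes S T :: "'a::metric_space set"
  assumes "compact S" "compact T" "S \<inter> T = {}" "S \<noteq> {}" "T \<noteq> {}"
  shows "\<exists>d>0. \<forall>p\<in>S. \<forall>q\<in>T. d \<le> dist p q"
proof -
  have "continuous_on S (\<lambda>p. infdist p T)"
    by (intro continuous_on_infdist continuous_on_id)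
  then obtain p0 where p0: "p0 \<in> S" "\<And>p. p \<in> S \<Longrightarrow> infdist p0 T \<le> infdist p T"
    using continuous_attains_inf[OF assms(1) assms(4)] by blast
  have "p0 \<notin> T" using p0(1) assms(3) by blast
  then have "infdist p0 T \<noteq> 0"
    using in_closed_iff_infdist_zero[OF compact_imp_closed[OF assms(2)] assms(5)] by blast
  then have pos: "infdist p0 T > 0" using infdist_nonneg[of p0 T] by linarith
  show ?thesis
  proof (intro exI[of _ "infdist p0 T"] conjI ballI pos)
    fix p q assume "p \<in> S" "q \<in> T"
    then show "infdist p0 T \<le> dist p q" using p0(2) infdist_le[of q T p] by force
  qed
qed

lemma continuous_on_common_delta:
  fixes g :: "nat \<Rightarrow> 'a::metric_space \<Rightarrow> 'b::metric_space"
  assumes "\<And>i. continuous_on X (g i)" "q \<in> X" "e > 0"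
  shows "\<exists>\<delta>>0. \<forall>w\<in>X. dist w q < \<delta> \<longrightarrow> (\<forall>i<L. dist (g i w) (g i q) < e)"
proof (induction L)
  case 0
  show ?case by (intro exI[of _ 1]) simp
next
  case (Suc L)
  then obtain d1 where d1: "d1 > 0" "\<forall>w\<in>X. dist w q < d1 \<longrightarrow> (\<forall>i<L. dist (g i w) (g i q) < e)"
    by blast
  obtain d2 where d2: "d2 > 0" "\<forall>w\<in>X. dist w q < d2 \<longrightarrow> dist (g L w) (g L q) < e"
    using assms(1)[of L] assms(2,3) unfolding continuous_on_iff by blast
  have "\<forall>w\<in>X. dist w q < min d1 d2 \<longrightarrow> (\<forall>i<Suc L. dist (g i w) (g i q) < e)"
    using d1(2) d2(2) less_Suc_eq by auto
  then show ?case using d1(1) d2(1) by (intro exI[of _ "min d1 d2"]) simp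
qed

lemma funpow_image_subset: "f ` C \<subseteq> C \<Longrightarrow> (f ^^ n) ` C \<subseteq> C"
  by (induction n) auto

lemma continuous_on_funpow:
  assumes "continuous_on X f" "f ` X \<subseteq> X"
  shows "continuous_on X (f ^^ n)"
proof (induction n)
  case 0
  show ?case by (simp add: continuous_on_id)
next
  case (Suc n)
  have "continuous_on ((f ^^ n) ` X) f"
    using assms continuous_on_subset funpow_image_subset by metis
  then show ?case using continuous_on_compose[OF Suc.IH] by simp
qed

lemma funpow_fixed_point: "f x = x \<Longrightarrow> (f ^^ n) x = x"
  by (induction n) auto

lemma orbit_closure_self: "y \<in> orbit_closure f y"
proof -
  have "y \<in> {(f ^^ n) y |n. True}" by (auto intro!: exI[of _ 0])
  then show ?thesis unfolding orbit_closure_def by (rule closure_subset[THEN subsetD])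
qed

lemma orbit_closure_closed: "closed (orbit_closure f y)"
  unfolding orbit_closure_def by simp

lemma orbit_closure_least:
  assumes "closed C" "f ` C \<subseteq> C" "y \<in> C"
  shows "orbit_closure f y \<subseteq> C"
  unfolding orbit_closure_def
  using funpow_image_subset[OF assms(2)] assms(3) by (intro closure_minimal[OF _ assms(1)]) blast

lemma orbit_closure_subset:
  assumes "dyn_system X f" "y \<in> X"
  shows "orbit_closure f y \<subseteq> X"
  using assms orbit_closure_least[of X f y] compact_imp_closed unfolding dyn_system_def by blast

lemma orbit_closure_invariant:
  assumes "dyn_system X f" "y \<in> X"
  shows "f ` orbit_closure f y \<subseteq> orbit_closure f y"
proof -
  have cont: "continuous_on (closure {(f ^^ n) y |n. True}) f"
    using assms orbit_closure_subset[OF assms] continuous_on_subset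
    unfolding dyn_system_def orbit_closure_def by blast
  have "f ` {(f ^^ n) y |n. True} \<subseteq> {(f ^^ n) y |n. True}"
  proof (rule image_subsetI)
    fix w assume "w \<in> {(f ^^ n) y |n. True}"
    then obtain n where "w = (f ^^ n) y" by blast
    then have "f w = (f ^^ Suc n) y" by simp
    then show "f w \<in> {(f ^^ n) y |n. True}" by blast
  qed
  then have "f ` {(f ^^ n) y |n. True} \<subseteq> closure {(f ^^ n) y |n. True}"
    using closure_subset by blast
  then show ?thesis
    using image_closure_subset[OF cont closed_closure] unfolding orbit_closure_def by simp
qed

lemma orbit_closure_compact:
  assumes "dyn_system X f" "y \<in> X"
  shows "compact (orbit_closure f y)"
  using assms(1) compact_Int_closed[OF _ orbit_closure_closed, of X f y]
    orbit_closure_subset[OF assms] unfolding dyn_system_def by (simp add: inf.absorb2)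

lemma orbit_closure_fixed_point:
  fixes x :: "'a::t1_space"
  assumes "f x = x"
  shows "orbit_closure f x = {x}"
proof -
  have "{(f ^^ n) x |n. True} = {x}" using funpow_fixed_point[of f x, OF assms] by auto
  then show ?thesis unfolding orbit_closure_def by (simp add: closure_closed)
qed

lemma minimal_set_compact:
  assumes "dyn_system X f" "minimal_set X f M"
  shows "compact M"
proof -
  have "M \<subseteq> X" "closed M" using assms(2) unfolding minimal_set_def by auto
  then show ?thesis
    using assms(1) compact_Int_closed[of X M] unfolding dyn_system_def by (simp add: inf.absorb2)
qed

lemma minimal_set_subset_if_meets:
  assumes "minimal_set X f M" "closed C" "f ` C \<subseteq> C" "M \<inter> C \<noteq> {}"
  shows "M \<subseteq> C"
proof -
  have M: "closed M" "f ` M \<subseteq> M"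
    and min: "\<And>N. N \<noteq> {} \<Longrightarrow> N \<subseteq> M \<Longrightarrow> closed N \<Longrightarrow> f ` N \<subseteq> N \<Longrightarrow> N = M"
    using assms(1) unfolding minimal_set_def by blast+
  have "f ` (M \<inter> C) \<subseteq> M \<inter> C" using M(2) assms(3) by blast
  then have "M \<inter> C = M"
    by (intro min) (use assms(4) closed_Int[OF M(1) assms(2)] in auto)
  then show ?thesis by blast
qed

lemma minimal_sets_meet_eq:
  assumes "minimal_set X f M" "minimal_set X f N" "M \<inter> N \<noteq> {}"
  shows "M = N"
proof -
  have N: "closed N" "f ` N \<subseteq> N" and M: "closed M" "f ` M \<subseteq> M"
    using assms(1,2) unfolding minimal_set_def by auto
  have "M \<subseteq> N" using minimal_set_subset_if_meets[OF assms(1) N assms(3)] .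
  moreover have "N \<subseteq> M" using minimal_set_subset_if_meets[OF assms(2) M] assms(3) by blast
  ultimately show ?thesis by blast
qed

lemma minimal_set_orbit_closure:
  assumes "dyn_system X f" "minimal_set X f M" "z \<in> M"
  shows "orbit_closure f z = M"
proof -
  have M: "M \<subseteq> X" "closed M" "f ` M \<subseteq> M"
    and min: "\<And>N. N \<noteq> {} \<Longrightarrow> N \<subseteq> M \<Longrightarrow> closed N \<Longrightarrow> f ` N \<subseteq> N \<Longrightarrow> N = M"
    using assms(2) unfolding minimal_set_def by blast+
  show ?thesis
  proof (rule min)
    show "orbit_closure f z \<noteq> {}" using orbit_closure_self by blast
    show "orbit_closure f z \<subseteq> M" using orbit_closure_least[OF M(2,3) assms(3)] .
    show "closed (orbit_closure f z)" by (rule orbit_closure_closed)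
    show "f ` orbit_closure f z \<subseteq> orbit_closure f z"
      using orbit_closure_invariant[OF assms(1)] M(1) assms(3) by blast
  qed
qed

lemma minimal_point_orbit_closure:
  assumes "dyn_system X f" "minimal_point X f z"
  shows "minimal_set X f (orbit_closure f z)"
  using assms minimal_set_orbit_closure unfolding minimal_point_def by metis

section \<open>Proximality and strong proximality to a minimal point\<close>

text \<open>Step (1): if a point of a minimal set \<open>M\<close> is proximal to \<open>y\<close>, then \<open>M\<close> lies in
  the orbit closure of \<open>y\<close>; otherwise the two compact sets would be a positive distance apart.\<close>
lemma proximal_minimal_subset_orbit_closure:
  assumes ds: "dyn_system X f" and M: "minimal_set X f M" "x \<in> M" and y: "y \<in> X"
    and prox: "\<forall>e>0. \<exists>n. dist ((f ^^ n) x) ((f ^^ n) y) < e"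
  shows "M \<subseteq> orbit_closure f y"
proof (rule minimal_set_subset_if_meets[OF M(1) orbit_closure_closed orbit_closure_invariant[OF ds y]])
  show "M \<inter> orbit_closure f y \<noteq> {}"
  proof
    assume disj: "M \<inter> orbit_closure f y = {}"
    obtain d where d: "d > 0" "\<forall>p\<in>M. \<forall>q\<in>orbit_closure f y. d \<le> dist p q"
      using compact_disjoint_separated[OF minimal_set_compact[OF ds M(1)]
          orbit_closure_compact[OF ds y] disj] M(2) orbit_closure_self by blast
    obtain n where n: "dist ((f ^^ n) x) ((f ^^ n) y) < d" using prox d(1) by blast
    have "(f ^^ n) x \<in> M"
      using funpow_image_subset[of f M n] M unfolding minimal_set_def by blast
    moreover have "(f ^^ n) y \<in> orbit_closure f y"
      using funpow_image_subset[OF orbit_closure_invariant[OF ds y], of n] orbit_closure_self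
      by blast
    ultimately show False using d(2) n by fastforce
  qed
qed

text \<open>The orbit of \<open>y\<close> comes \<open>e\<close>-close to a nonempty invariant set \<open>M\<close> inside its orbit
  closure along a thick set of times: once it is close enough to a point \<open>q \<in> M\<close>, it
  shadows the orbit of \<open>q\<close> for any prescribed number of steps.\<close>
lemma thick_approach_times:
  assumes ds: "dyn_system X f" and y: "y \<in> X"
    and M: "M \<noteq> {}" "f ` M \<subseteq> M" "M \<subseteq> orbit_closure f y" and e: "e > 0"
  shows "thick {n. \<exists>p\<in>M. dist ((f ^^ n) y) p < e}"
  unfolding thick_def
proof
  fix L
  have fX: "f ` X \<subseteq> X" and cf: "continuous_on X f" using ds unfolding dyn_system_def by auto
  obtain q where q: "q \<in> M" using M(1) by blast
  then have qX: "q \<in> X" using M(3) orbit_closure_subset[OF ds y] by blast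
  obtain \<delta> where \<delta>: "\<delta> > 0" "\<forall>w\<in>X. dist w q < \<delta> \<longrightarrow> (\<forall>i<L. dist ((f ^^ i) w) ((f ^^ i) q) < e)"
    using continuous_on_common_delta[where g = "\<lambda>i. f ^^ i" and L = L,
        OF continuous_on_funpow[OF cf fX] qX e] by blast
  have "q \<in> closure {(f ^^ n) y |n. True}" using q M(3) unfolding orbit_closure_def by blast
  then obtain m where m: "dist ((f ^^ m) y) q < \<delta>"
    using \<delta>(1) unfolding closure_approachable by blast
  have ymX: "(f ^^ m) y \<in> X" using funpow_image_subset[OF fX] y by blast
  have "{m..<m+L} \<subseteq> {n. \<exists>p\<in>M. dist ((f ^^ n) y) p < e}"
  proof
    fix n assume "n \<in> {m..<m+L}"
    then have i: "n - m < L" "n = (n - m) + m" by auto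
    have "dist ((f ^^ (n - m)) ((f ^^ m) y)) ((f ^^ (n - m)) q) < e" using \<delta>(2) ymX m i(1) by blast
    moreover have "(f ^^ (n - m)) q \<in> M" using funpow_image_subset[OF M(2)] q by blast
    ultimately show "n \<in> {n. \<exists>p\<in>M. dist ((f ^^ n) y) p < e}"
      using i(2) by (metis (mono_tags, lifting) funpow_add comp_apply mem_Collect_eq)
  qed
  then show "\<exists>n. {n..<n + L} \<subseteq> {n. \<exists>p\<in>M. dist ((f ^^ n) y) p < e}" by blast
qed

text \<open>Step (2): if \<open>x\<close> lies in the minimal set \<open>Mx\<close> and \<open>(x, y)\<close> is strongly proximal,
  then \<open>Mx\<close> is the only minimal set in the orbit closure of \<open>y\<close>: the syndetic set of times
  where \<open>x\<close> and \<open>y\<close> are close meets the thick set of times where \<open>y\<close> is close to \<open>M\<close>.\<close>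
lemma SProx_unique_minimal_set:
  assumes ds: "dyn_system X f" and Mx: "minimal_set X f Mx" "x \<in> Mx"
    and sp: "(x, y) \<in> SProx X f" and M: "minimal_set X f M" "M \<subseteq> orbit_closure f y"
  shows "M = Mx"
proof (rule ccontr)
  assume "M \<noteq> Mx"
  then have disj: "M \<inter> Mx = {}" using minimal_sets_meet_eq[OF M(1) Mx(1)] by blast
  have M_props: "M \<noteq> {}" "f ` M \<subseteq> M" using M(1) unfolding minimal_set_def by auto
  obtain d where d: "d > 0" "\<forall>p\<in>M. \<forall>q\<in>Mx. d \<le> dist p q"
    using compact_disjoint_separated[OF minimal_set_compact[OF ds M(1)]
        minimal_set_compact[OF ds Mx(1)] disj M_props(1)] Mx(2) by blast
  have y: "y \<in> X" and syn: "\<forall>e>0. syndetic {n. dist ((f ^^ n) x) ((f ^^ n) y) < e}"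
    using sp unfolding SProx_def by auto
  have close: "syndetic {n. dist ((f ^^ n) x) ((f ^^ n) y) < d/2}"
    using syn[rule_format, OF half_gt_zero[OF d(1)]] .
  have "thick {n. \<exists>p\<in>M. dist ((f ^^ n) y) p < d/2}"
    using thick_approach_times[OF ds y M_props M(2) half_gt_zero[OF d(1)]] .
  then obtain n p where n: "dist ((f ^^ n) x) ((f ^^ n) y) < d/2"
    and p: "p \<in> M" "dist ((f ^^ n) y) p < d/2"
    using close unfolding syndetic_def by blast
  have "dist p ((f ^^ n) x) < d"
    using n p(2) dist_triangle[of p "(f ^^ n) x" "(f ^^ n) y"] by (simp add: dist_commute)
  moreover have "(f ^^ n) x \<in> Mx"
    using funpow_image_subset[of f Mx n] Mx unfolding minimal_set_def by blast
  ultimately show False using d(2) p(1) by fastforce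
qed

lemma SProx_minimal_point:
  assumes ds: "dyn_system X f" and x: "minimal_point X f x" and sp: "(x, y) \<in> SProx X f"
  shows "orbit_closure f x \<subseteq> orbit_closure f y"
    and "\<And>M. minimal_set X f M \<Longrightarrow> M \<subseteq> orbit_closure f y \<Longrightarrow> M = orbit_closure f x"
proof -
  have Mx: "minimal_set X f (orbit_closure f x)" "x \<in> orbit_closure f x"
    using minimal_point_orbit_closure[OF ds x] orbit_closure_self by auto
  have "y \<in> X" and "\<forall>e>0. \<exists>n. dist ((f ^^ n) x) ((f ^^ n) y) < e"
    using sp syndetic_nonempty unfolding SProx_def by auto
  then show "orbit_closure f x \<subseteq> orbit_closure f y"
    using proximal_minimal_subset_orbit_closure[OF ds Mx] by blast
  show "M = orbit_closure f x" if "minimal_set X f M" "M \<subseteq> orbit_closure f y" for M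
    using SProx_unique_minimal_set[OF ds Mx sp that] .
qed

section \<open>Strong proximality to a fixed point\<close>

text \<open>Visiting a closed set \<open>K\<close> with gaps bounded by \<open>L\<close> along the orbit of \<open>y\<close> is
  inherited by every point of the orbit closure: for a fixed window of times, the points
  visiting \<open>K\<close> during that window form a closed set containing the orbit of \<open>y\<close>.\<close>
lemma orbit_closure_bounded_visits:
  assumes ds: "dyn_system X f" and y: "y \<in> X" and K: "closed K"
    and visits: "\<forall>m. \<exists>j\<in>{m..<m+L}. (f ^^ j) y \<in> K" and z: "z \<in> orbit_closure f y"
  shows "\<exists>j\<in>{n..<n+L}. (f ^^ j) z \<in> K"
proof -
  have fX: "f ` X \<subseteq> X" and cf: "continuous_on X f" and cX: "closed X"
    using ds compact_imp_closed unfolding dyn_system_def by auto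
  define C where "C = (\<Union>j\<in>{n..<n+L}. X \<inter> (f ^^ j) -` K)"
  have "closed C" unfolding C_def
    by (intro closed_UN finite_atLeastLessThan ballI continuous_closed_preimage
        continuous_on_funpow[OF cf fX] cX K)
  moreover have "{(f ^^ m) y |m. True} \<subseteq> C"
  proof
    fix w assume "w \<in> {(f ^^ m) y |m. True}"
    then obtain m where w: "w = (f ^^ m) y" by blast
    obtain j' where j': "j' \<in> {n+m..<n+m+L}" "(f ^^ j') y \<in> K" using visits by blast
    then have "j' = (j' - m) + m" by simp
    then have "(f ^^ (j' - m)) w = (f ^^ j') y"
      using w by (metis comp_apply funpow_add)
    moreover have "w \<in> X" using w funpow_image_subset[OF fX] y by blast
    ultimately show "w \<in> C" unfolding C_def using j' by (auto intro!: bexI[of _ "j' - m"])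
  qed
  ultimately have "orbit_closure f y \<subseteq> C" unfolding orbit_closure_def by (rule closure_minimal[rotated])
  then show ?thesis using z unfolding C_def by blast
qed

lemma SProx_fixed_point_orbit_closure:
  assumes ds: "dyn_system X f" and fx: "f x = x"
    and sp: "(x, y) \<in> SProx X f" and z: "z \<in> orbit_closure f y"
  shows "(x, z) \<in> SProx X f"
proof -
  have xX: "x \<in> X" and y: "y \<in> X"
    and syn: "\<And>e. e > 0 \<Longrightarrow> syndetic {n. dist ((f ^^ n) x) ((f ^^ n) y) < e}"
    using sp unfolding SProx_def by auto
  have "syndetic {n. dist ((f ^^ n) x) ((f ^^ n) z) < e}" if e: "e > 0" for e
  proof -
    obtain L where L: "\<forall>m. \<exists>j\<in>{m..<m+L}. j \<in> {n. dist ((f ^^ n) x) ((f ^^ n) y) < e/2}"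
      using syn[of "e/2"] e unfolding syndetic_iff_bounded_gaps by auto
    have "\<exists>j\<in>{m..<m+L}. (f ^^ j) y \<in> cball x (e/2)" for m
    proof -
      obtain j where j: "j \<in> {m..<m+L}" "dist ((f ^^ j) x) ((f ^^ j) y) < e/2" using L by blast
      then have "(f ^^ j) y \<in> cball x (e/2)"
        using funpow_fixed_point[of f x j, OF fx] by (simp add: mem_cball)
      then show ?thesis using j(1) by blast
    qed
    then have z_visits: "\<exists>j\<in>{n..<n+L}. (f ^^ j) z \<in> cball x (e/2)" for n
      using orbit_closure_bounded_visits[OF ds y closed_cball _ z] by blast
    have "\<exists>j\<in>{n..<n+L}. j \<in> {n. dist ((f ^^ n) x) ((f ^^ n) z) < e}" for n
    proof -
      obtain j where j: "j \<in> {n..<n+L}" "dist x ((f ^^ j) z) \<le> e/2"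
        using z_visits[of n] by (auto simp: mem_cball)
      then have "dist ((f ^^ j) x) ((f ^^ j) z) < e"
        using e funpow_fixed_point[of f x j, OF fx] by simp
      then show ?thesis using j(1) by blast
    qed
    then show ?thesis unfolding syndetic_iff_bounded_gaps by blast
  qed
  moreover have "z \<in> X" using orbit_closure_subset[OF ds y] z by blast
  ultimately show ?thesis using xX unfolding SProx_def by auto
qed

lemma fixed_point_minimal_point:
  fixes x :: "'a::t1_space"
  assumes "x \<in> X" "f x = x"
  shows "minimal_point X f x"
  unfolding minimal_point_def minimal_set_def
  using assms by (intro exI[of _ "{x}"]) (auto dest: subset_singletonD)

lemma SProx_fixed_point_minimal_points:
  assumes ds: "dyn_system X f" and fx: "f x = x" and sp: "(x, y) \<in> SProx X f"
  shows "x \<in> orbit_closure f y"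
    and "\<And>z. minimal_point X f z \<Longrightarrow> z \<in> orbit_closure f y \<Longrightarrow> z = x"
proof -
  have y: "y \<in> X" and "x \<in> X" using sp unfolding SProx_def by auto
  then have x: "minimal_point X f x" using fixed_point_minimal_point[of x X f, OF _ fx] by blast
  have ocx: "orbit_closure f x = {x}" using orbit_closure_fixed_point[of f x, OF fx] .
  then show "x \<in> orbit_closure f y" using SProx_minimal_point(1)[OF ds x sp] by simp
  show "z = x" if z: "minimal_point X f z" "z \<in> orbit_closure f y" for z
  proof -
    have "orbit_closure f z \<subseteq> orbit_closure f y"
      using orbit_closure_least[OF orbit_closure_closed orbit_closure_invariant[OF ds y] z(2)] .
    then have "orbit_closure f z = {x}"
      using SProx_minimal_point(2)[OF ds x sp minimal_point_orbit_closure[OF ds z(1)]] ocx by simp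
    then show ?thesis using orbit_closure_self[of z f] by simp
  qed
qed

lemma SProx_at_fixed_point_union:
  assumes ds: "dyn_system X f" and fx: "f x = x"
  shows "SProx_at X f x = (\<Union>y \<in> SProx_at X f x. orbit_closure f y)"
proof (intro equalityI subsetI)
  fix z assume "z \<in> SProx_at X f x"
  then show "z \<in> (\<Union>y \<in> SProx_at X f x. orbit_closure f y)" using orbit_closure_self by blast
next
  fix z assume "z \<in> (\<Union>y \<in> SProx_at X f x. orbit_closure f y)"
  then obtain y where "(x, y) \<in> SProx X f" "z \<in> orbit_closure f y"
    unfolding SProx_at_def by blast
  then show "z \<in> SProx_at X f x"
    using SProx_fixed_point_orbit_closure[OF ds fx] unfolding SProx_at_def by blast
qed

theorem proposition7p4:
  fixes X :: "'a::metric_space set" and f :: "'a \<Rightarrow> 'a" and x :: 'a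
  assumes "dyn_system X f"
    and "minimal_point X f x"
  shows "(\<forall>y. (x, y) \<in> SProx X f \<longrightarrow>
            minimal_set X f (orbit_closure f x) \<and>
            orbit_closure f x \<subseteq> orbit_closure f y \<and>
            (\<forall>M. minimal_set X f M \<and> M \<subseteq> orbit_closure f y \<longrightarrow> M = orbit_closure f x))
       \<and> (f x = x \<longrightarrow>
            (\<forall>y \<in> SProx_at X f x.
               x \<in> orbit_closure f y \<and>
               (\<forall>z. minimal_point X f z \<and> z \<in> orbit_closure f y \<longrightarrow> z = x))
            \<and> SProx_at X f x = (\<Union>y \<in> SProx_at X f x. orbit_closure f y))"
proof (intro conjI allI impI ballI)
  fix y assume sp: "(x, y) \<in> SProx X f"
  show "minimal_set X f (orbit_closure f x)" using minimal_point_orbit_closure[OF assms] .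
  show "orbit_closure f x \<subseteq> orbit_closure f y" using SProx_minimal_point(1)[OF assms sp] .
  fix M assume "minimal_set X f M \<and> M \<subseteq> orbit_closure f y"
  then show "M = orbit_closure f x" using SProx_minimal_point(2)[OF assms sp] by blast
next
  fix y assume fx: "f x = x" and "y \<in> SProx_at X f x"
  then have sp: "(x, y) \<in> SProx X f" unfolding SProx_at_def by simp
  show "x \<in> orbit_closure f y" using SProx_fixed_point_minimal_points(1)[OF assms(1) fx sp] .
  fix z assume "minimal_point X f z \<and> z \<in> orbit_closure f y"
  then show "z = x" using SProx_fixed_point_minimal_points(2)[OF assms(1) fx sp] by blast
next
  assume "f x = x"
  then show "SProx_at X f x = (\<Union>y \<in> SProx_at X f x. orbit_closure f y)"
    using SProx_at_fixed_point_union[OF assms(1)] by blast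
qed

end
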